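(* Assume the linear band crossing and Band Crossing Scenario described in the context, with limit point $(q^*,p^* )$ at time $t^*$. (i) For sufficiently small $\delta'>0$, the system $$\dot q_-=\partial_pE_-(p_-),\quad \dot p_-=-\partial_qW(q_-),\quad q_-(t^* )=q^*,\ p_-(t^* )=p^*$$ has a unique smooth solution $(q_-(t),p_-(t))\in\mathbb R\times U$ on $[t^*-\delta',t^*+\delta']$. (ii) For sufficiently small $T'\ge t^*+\delta'$, there exists a solution $(q_n(t),p_n(t))\in\mathbb R\times\mathcal B$ on $(t^*,T']$ of $$\dot q_n=\partial_pE_n(p_n),\quad \dot p_n=-\partial_qW(q_n)$$ with $\lim_{t\downarrow t^*}(q_n(t),p_n(t))=(q^*,p^* )$ and $G(E_n(p_n(t)))>0$ for all $t\in(t^*,T']$. It satisfies $(q_-(t),p_-(t))=(q_n(t),p_n(t))$ for all $t\in(t^*,t^*+\delta']$. (iii) Consequently, the map $t\mapsto(\mathfrak q_-(t),\mathfrak p_-(t))$ is smooth on $[t^*-\delta',T']$. This map is defined as $(q_-(t),p_-(t))$ on $[t^*-\delta',t^*+\delta']$ and as $(q_n(t),p_n(t))$ on $[t^*+\delta',T']$.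
   Context: **Potentials.** Let $V:\mathbb R\to\mathbb R$ be smooth and $1$-periodic, and let $W:\mathbb R\to\mathbb R$ be smooth with all derivatives bounded. **Bloch bands.** For $p\in\mathbb R$, $H(p):=\frac12(p-i\partial_z)^2+V(z)$ acts on $1$-periodic functions. Its eigenvalues, ordered with multiplicity, are $E_1(p)\le E_2(p)\le\cdots$, with normalized eigenfunctions $\chi_m(z;p)$. The Brillouin zone is $\mathcal B=[0,2\pi]$, and $G(E_m(p)):=\min_{m'\ne m}|E_m(p)-E_{m'}(p)|$. **Linear band crossing.** $U\subset\mathcal B$ is open with $p^*\in U$, and: - (A1) $E_n(p^* )=E_{n+1}(p^* )$, with no other degeneracy of $E_n,E_{n+1}$ in $U$. - (A2) There is $M>0$ with $|E_m-E_{n+1}|,|E_n-E_m|\ge M$ on $\overline U$ for all $m\notin\{n,n+1\}$. - (A3) The maps $(E_+,\chi_+):=(E_n,\chi_n)$ for $p<p^*$ and $(E_{n+1},\chi_{n+1})$ for $p\ge p^*$, and $(E_-,\chi_-):=(E_{n+1},\chi_{n+1})$ for $p<p^*$ and $(E_n,\chi_n)$ for $p\ge p^*$, are smooth on $U$. - (A4) $\partial_pE_+(p^* )>0>\partial_pE_-(p^* )$. **Band Crossing Scenario.** $(q_0,p_0)$ satisfies $G(E_n(p_0))>0$. The system $\dot q=\partial_pE_n(p)$, $\dot p=-\partial_qW(q)$, $(q,p)(0)=(q_0,p_0)$ has a unique smooth solution on $[0,t^* )$ (with $t^*>0$), along which $G(E_n(p(t)))>0$. Moreover $p(t)\to p^*$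 as $t\uparrow t^*$, $q^*:=\lim_{t\uparrow t^*}q(t)$, and $-\partial_qW(q^* )>0$. *)

theory Defs
  imports "HOL-Analysis.Analysis"
begin

text \<open>C-infinity on a set S of reals: there is a family of successive derivatives
  (taken within S, i.e. one-sided at boundary points of an interval).\<close>
definition smooth_on :: "real set \<Rightarrow> (real \<Rightarrow> 'a::real_normed_vector) \<Rightarrow> bool" where
  "smooth_on S f \<longleftrightarrow>
     (\<exists>D :: nat \<Rightarrow> real \<Rightarrow> 'a. (\<forall>x\<in>S. D 0 x = f x) \<and>
        (\<forall>k. \<forall>x\<in>S. (D k has_vector_derivative D (Suc k) x) (at x within S)))"

definition smooth_bounded_derivs :: "(real \<Rightarrow> real) \<Rightarrow> bool" where
  "smooth_bounded_derivs W \<longleftrightarrow>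
     (\<exists>D :: nat \<Rightarrow> real \<Rightarrow> real. D 0 = W \<and>
        (\<forall>k x. (D k has_real_derivative D (Suc k) x) (at x)) \<and>
        (\<forall>k\<ge>1. bounded (range (D k))))"

definition smooth2_on :: "real set \<Rightarrow> real set \<Rightarrow> (real \<Rightarrow> real \<Rightarrow> complex) \<Rightarrow> bool" where
  "smooth2_on A B f \<longleftrightarrow>
     (\<exists>D :: nat \<Rightarrow> nat \<Rightarrow> real \<Rightarrow> real \<Rightarrow> complex.
        (\<forall>z\<in>A. \<forall>p\<in>B. D 0 0 z p = f z p) \<and>
        (\<forall>i j. \<forall>z\<in>A. \<forall>p\<in>B.
            ((\<lambda>z'. D i j z' p) has_vector_derivative D (Suc i) j z p) (at z within A) \<and>
            ((\<lambda>p'. D i j z p') has_vector_derivative D i (Suc j) z p) (at p within B)) \<and>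
        (\<forall>i j. continuous_on (A \<times> B) (\<lambda>(z,p). D i j z p)))"

text \<open>chi is an eigenfunction of H(p) = 1/2 (p - i d/dz)^2 + V(z) on 1-periodic functions,
  with (real) eigenvalue E:  1/2 (p^2 chi - 2 i p chi' - chi'') + V chi = E chi.\<close>
definition bloch_eigenfunction ::
  "(real \<Rightarrow> real) \<Rightarrow> real \<Rightarrow> real \<Rightarrow> (real \<Rightarrow> complex) \<Rightarrow> bool" where
  "bloch_eigenfunction V p E f \<longleftrightarrow>
     (\<exists>z. f z \<noteq> 0) \<and> (\<forall>z. f (z + 1) = f z) \<and>
     (\<exists>f1 f2. \<forall>z. (f has_vector_derivative f1 z) (at z) \<and>
                   (f1 has_vector_derivative f2 z) (at z) \<and>
                   (1/2) * (complex_of_real (p^2) * f z - 2 * \<i> * complex_of_real p * f1 z - f2 z)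
                     + complex_of_real (V z) * f z = complex_of_real E * f z)"

definition normalized_bloch_eigenfunction ::
  "(real \<Rightarrow> real) \<Rightarrow> real \<Rightarrow> real \<Rightarrow> (real \<Rightarrow> complex) \<Rightarrow> bool" where
  "normalized_bloch_eigenfunction V p E f \<longleftrightarrow>
     bloch_eigenfunction V p E f \<and> integral {0..1} (\<lambda>z. (cmod (f z))^2) = 1"

definition lin_indep_funs :: "(real \<Rightarrow> complex) set \<Rightarrow> bool" where
  "lin_indep_funs S \<longleftrightarrow>
     (\<forall>c. (\<forall>z. (\<Sum>f\<in>S. c f * f z) = 0) \<longrightarrow> (\<forall>f\<in>S. c f = 0))"

definition bloch_multiplicity :: "(real \<Rightarrow> real) \<Rightarrow> real \<Rightarrow> real \<Rightarrow> nat" where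
  "bloch_multiplicity V p E =
     Sup {card S | S. finite S \<and> S \<subseteq> {f. bloch_eigenfunction V p E f} \<and> lin_indep_funs S}"

definition bloch_count :: "(real \<Rightarrow> real) \<Rightarrow> real \<Rightarrow> real \<Rightarrow> nat" where
  "bloch_count V p lam =
     (\<Sum>E\<in>{E. E \<le> lam \<and> 0 < bloch_multiplicity V p E}. bloch_multiplicity V p E)"

text \<open>E_m(p), m \<ge> 1: the m-th eigenvalue of H(p), ordered increasingly with multiplicity.\<close>
definition bloch_band :: "(real \<Rightarrow> real) \<Rightarrow> nat \<Rightarrow> real \<Rightarrow> real" where
  "bloch_band V m p = Inf {lam. m \<le> bloch_count V p lam}"

definition bloch_gap :: "(real \<Rightarrow> real) \<Rightarrow> nat \<Rightarrow> real \<Rightarrow> real" where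
  "bloch_gap V m p = Inf {\<bar>bloch_band V m p - bloch_band V m' p\<bar> | m'. 1 \<le> m' \<and> m' \<noteq> m}"

definition E_plus :: "(real \<Rightarrow> real) \<Rightarrow> nat \<Rightarrow> real \<Rightarrow> real \<Rightarrow> real" where
  "E_plus V n ps p = (if p < ps then bloch_band V n p else bloch_band V (Suc n) p)"

definition E_minus :: "(real \<Rightarrow> real) \<Rightarrow> nat \<Rightarrow> real \<Rightarrow> real \<Rightarrow> real" where
  "E_minus V n ps p = (if p < ps then bloch_band V (Suc n) p else bloch_band V n p)"

definition ham_sol :: "(real \<Rightarrow> real) \<Rightarrow> (real \<Rightarrow> real) \<Rightarrow> real set \<Rightarrow>
    (real \<Rightarrow> real) \<Rightarrow> (real \<Rightarrow> real) \<Rightarrow> bool" where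
  "ham_sol E W S q p \<longleftrightarrow>
     (\<forall>t\<in>S. (q has_real_derivative deriv E (p t)) (at t within S) \<and>
            (p has_real_derivative - deriv W (q t)) (at t within S))"

end

theory Submission
  imports Defs
begin

text \<open>The E_- equations q' = a(p), p' = b(q), with a = E_-' smooth near ps and b = -W' globally
  Lipschitz, are solved near ts by Picard iteration; uniqueness follows from Gronwall's inequality.
  Since p' = -W'(q) > 0 near qs, the momentum crosses ps with positive speed, so p > ps for t > ts.
  There E_- coincides with E_n and, by (A1) and (A2), the gap of E_n is open, so the E_- trajectory
  is itself the required E_n trajectory after ts and the glued map is just the E_- trajectory.
  Only the limit point (qs, ps) of the incoming trajectory is used, not the trajectory itself.\<close>

section \<open>Lipschitz and Gronwall estimates on the real line\<close>

lemma lipschitz_on_vector_derivative_bound: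
  fixes f :: "real \<Rightarrow> 'a::real_normed_vector"
  assumes "convex S" and "\<forall>t\<in>S. (f has_vector_derivative f' t) (at t within S)"
    and "\<forall>t\<in>S. norm (f' t) \<le> C" and "0 \<le> C"
  shows "C-lipschitz_on S f"
  using assms
  by (intro bounded_derivative_imp_lipschitz[where f'="\<lambda>t h. h *\<^sub>R f' t"])
     (auto simp: has_vector_derivative_def onorm_scaleR_left onorm_id)

lemma lipschitz_on_real_derivative_bound:
  fixes f :: "real \<Rightarrow> real"
  assumes "convex S" and "\<forall>t\<in>S. (f has_real_derivative f' t) (at t within S)"
    and "\<forall>t\<in>S. \<bar>f' t\<bar> \<le> C" and "0 \<le> C"
  shows "C-lipschitz_on S f"
  using assms
  by (intro lipschitz_on_vector_derivative_bound)
     (auto simp: has_real_derivative_iff_has_vector_derivative)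

lemma lipschitz_on_compact_convex_C1:
  fixes f :: "real \<Rightarrow> real"
  assumes "compact K" "convex K"
    and "\<forall>y\<in>K. (f has_real_derivative f' y) (at y)" and "continuous_on K f'"
  shows "\<exists>L. L-lipschitz_on K f"
proof -
  obtain M where M: "\<forall>y\<in>K. \<bar>f' y\<bar> \<le> M"
    using compact_continuous_image[OF assms(4,1)] compact_imp_bounded bounded_iff
    by (metis imageI real_norm_def)
  then have "(max 0 M)-lipschitz_on K f"
    using assms(2,3)
    by (intro lipschitz_on_real_derivative_bound) (auto intro: has_field_derivative_at_within)
  then show ?thesis ..
qed

lemma lipschitz_on_clamp_C1:
  fixes a a' :: "real \<Rightarrow> real"
  assumes r: "0 < r" and da: "\<forall>y\<in>cball c r. (a has_real_derivative a' y) (at y)"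
    and ca: "continuous_on (cball c r) a'"
  obtains L M where "L-lipschitz_on UNIV (\<lambda>y. a (max (c-r) (min (c+r) y)))"
    "\<forall>y. \<bar>a (max (c-r) (min (c+r) y))\<bar> \<le> M"
proof -
  define cl where "cl y = max (c-r) (min (c+r) y)" for y
  have cl_in: "cl y \<in> cball c r" for y unfolding cl_def cball_eq_atLeastAtMost using r by auto
  obtain L where L: "L-lipschitz_on (cball c r) a"
    using lipschitz_on_compact_convex_C1[OF compact_cball convex_cball da ca] by blast
  have "1-lipschitz_on UNIV cl" unfolding cl_def by (rule lipschitz_onI) (auto simp: dist_real_def)
  then have "L-lipschitz_on UNIV (\<lambda>y. a (cl y))"
    using lipschitz_on_compose[of 1 UNIV cl L a] lipschitz_on_subset[OF L] cl_in
    by (auto simp: o_def image_subset_iff)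
  moreover have "continuous_on (cball c r) a"
    using da by (meson DERIV_isCont continuous_at_imp_continuous_on)
  then obtain M where "\<forall>y\<in>cball c r. \<bar>a y\<bar> \<le> M"
    using compact_continuous_image[of "cball c r" a] compact_imp_bounded bounded_iff
    by (metis compact_cball imageI real_norm_def)
  ultimately show thesis using that cl_in unfolding cl_def by blast
qed

lemma lipschitz_on_swap_Pair:
  fixes f g :: "real \<Rightarrow> real"
  assumes f: "Lf-lipschitz_on UNIV f" and g: "Lg-lipschitz_on UNIV g"
  shows "(Lf + Lg)-lipschitz_on UNIV (\<lambda>z. (f (snd z), g (fst z)))"
proof (rule lipschitz_onI)
  fix z w :: "real \<times> real"
  have "dist (f (snd z), g (fst z)) (f (snd w), g (fst w))
          \<le> dist (f (snd z)) (f (snd w)) + dist (g (fst z)) (g (fst w))"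
    unfolding dist_norm using norm_Pair_le by (metis diff_Pair)
  also have "\<dots> \<le> Lf * dist (snd z) (snd w) + Lg * dist (fst z) (fst w)"
    by (intro add_mono lipschitz_onD[OF f] lipschitz_onD[OF g]) auto
  also have "\<dots> \<le> Lf * dist z w + Lg * dist z w"
    using lipschitz_on_nonneg[OF f] lipschitz_on_nonneg[OF g]
    by (intro add_mono mult_left_mono dist_fst_le dist_snd_le)
  finally show "dist (f (snd z), g (fst z)) (f (snd w), g (fst w)) \<le> (Lf + Lg) * dist z w"
    by (simp add: algebra_simps)
qed (use lipschitz_on_nonneg[OF f] lipschitz_on_nonneg[OF g] in simp)

lemma has_real_derivative_fst_snd:
  assumes "(X has_vector_derivative D) F"
  shows "((\<lambda>t. fst (X t)) has_real_derivative fst D) F"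
    and "((\<lambda>t. snd (X t)) has_real_derivative snd D) F"
  using has_derivative_fst[OF assms[unfolded has_vector_derivative_def]]
    has_derivative_snd[OF assms[unfolded has_vector_derivative_def]]
  by (simp_all add: has_real_derivative_iff_has_vector_derivative has_vector_derivative_def)

lemma pos_derivative_within_imp_less:
  fixes f :: "real \<Rightarrow> real"
  assumes d: "\<forall>x\<in>{c..d}. (f has_real_derivative f' x) (at x within {c..d})"
    and pos: "\<forall>x\<in>{c..d}. 0 < f' x" and st: "c \<le> s" "s < t" "t \<le> d"
  shows "f s < f t"
proof (rule DERIV_pos_imp_increasing_open[OF st(2)])
  fix x assume "s < x" "x < t"
  then have x: "c < x" "x < d" "x \<in> {c..d}" using st by auto
  then have "(f has_real_derivative f' x) (at x within {c..d})" using d by blast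
  then have "(f has_real_derivative f' x) (at x)" using at_within_Icc_at[OF x(1,2)] by simp
  then show "\<exists>y. (f has_real_derivative y) (at x) \<and> 0 < y" using pos x(3) by blast
next
  have "continuous_on {c..d} f"
    using d by (meson DERIV_continuous continuous_on_eq_continuous_within)
  then show "continuous_on {s..t} f" by (rule continuous_on_subset) (use st in auto)
qed

text \<open>Gronwall's inequality in the form needed for uniqueness: the weights exp (\<mp>C s) make
  \<phi> monotone on either side of a zero.\<close>

lemma gronwall_vanishing:
  fixes \<phi> \<phi>' :: "real \<Rightarrow> real"
  assumes d: "\<forall>s\<in>{c..d}. (\<phi> has_real_derivative \<phi>' s) (at s within {c..d})"
    and bnd: "\<forall>s\<in>{c..d}. 0 \<le> \<phi> s \<and> \<bar>\<phi>' s\<bar> \<le> C * \<phi> s"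
    and t0: "t0 \<in> {c..d}" "\<phi> t0 = 0" and t: "t \<in> {c..d}"
  shows "\<phi> t = 0"
proof -
  have d_at: "(\<phi> has_real_derivative \<phi>' s) (at s)" if "c < s" "s < d" for s
    using d at_within_Icc_at[OF that] that by (metis atLeastAtMost_iff less_imp_le)
  have cont: "continuous_on {x..y} \<phi>" if "{x..y} \<subseteq> {c..d}" for x y
    using continuous_on_subset[OF _ that] d
    by (meson DERIV_continuous continuous_on_eq_continuous_within)
  consider "t0 \<le> t" | "t \<le> t0" by linarith
  then have "\<phi> t \<le> 0"
  proof cases
    case 1
    define \<psi> where "\<psi> s = exp (- C * s) * \<phi> s" for s
    have "\<psi> t \<le> \<psi> t0"
    proof (rule DERIV_nonpos_imp_decreasing_open[OF 1])
      fix x assume x: "t0 < x" "x < t"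
      then have "\<bar>\<phi>' x\<bar> \<le> C * \<phi> x" "(\<phi> has_real_derivative \<phi>' x) (at x)"
        using bnd d_at t0 t by auto
      then show "\<exists>y. (\<psi> has_real_derivative y) (at x) \<and> y \<le> 0"
        unfolding \<psi>_def
        by (intro exI[of _ "exp (- C * x) * (\<phi>' x - C * \<phi> x)"])
           (auto intro!: derivative_eq_intros mult_nonneg_nonpos simp: algebra_simps)
    qed (unfold \<psi>_def, use t0 t in \<open>auto intro!: continuous_intros cont\<close>)
    then show ?thesis using t0 by (simp add: \<psi>_def mult_le_0_iff)
  next
    case 2
    define \<psi> where "\<psi> s = exp (C * s) * \<phi> s" for s
    have "\<psi> t \<le> \<psi> t0"
    proof (rule DERIV_nonneg_imp_increasing_open[OF 2])
      fix x assume x: "t < x" "x < t0"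
      then have "\<bar>\<phi>' x\<bar> \<le> C * \<phi> x" "(\<phi> has_real_derivative \<phi>' x) (at x)"
        using bnd d_at t0 t by auto
      then show "\<exists>y. (\<psi> has_real_derivative y) (at x) \<and> 0 \<le> y"
        unfolding \<psi>_def
        by (intro exI[of _ "exp (C * x) * (\<phi>' x + C * \<phi> x)"] conjI mult_nonneg_nonneg)
           (auto intro!: derivative_eq_intros simp: algebra_simps abs_le_iff)
    qed (unfold \<psi>_def, use t0 t in \<open>auto intro!: continuous_intros cont\<close>)
    then show ?thesis using t0 by (simp add: \<psi>_def mult_le_0_iff)
  qed
  then show ?thesis using bnd t by force
qed

section \<open>Picard iteration\<close>

lemma norm_integral_diff_lipschitz_le:
  fixes F :: "'a::banach \<Rightarrow> 'a" and x y :: "real \<Rightarrow>\<^sub>C 'a"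
  assumes lip: "L-lipschitz_on UNIV F" and "c \<le> u"
  shows "norm (integral {c..u} (\<lambda>s. F (x s)) - integral {c..u} (\<lambda>s. F (y s)))
           \<le> L * dist x y * (u - c)"
proof -
  have cont: "continuous_on {c..u} (\<lambda>s. F (z s))" for z :: "real \<Rightarrow>\<^sub>C 'a"
    by (rule continuous_on_compose2[OF lipschitz_on_continuous_on[OF lip] continuous_on_apply_bcontfun])
       simp
  have "integral {c..u} (\<lambda>s. F (x s)) - integral {c..u} (\<lambda>s. F (y s))
          = integral {c..u} (\<lambda>s. F (x s) - F (y s))"
    by (intro integral_diff[symmetric] integrable_continuous_interval cont)
  also have "norm \<dots> \<le> L * dist x y * (u - c)"
  proof (rule integral_bound)
    fix s
    have "norm (F (x s) - F (y s)) \<le> L * dist (x s) (y s)"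
      using lipschitz_on_normD[OF lip] by (simp add: dist_norm)
    also have "\<dots> \<le> L * dist x y"
      using dist_bounded lipschitz_on_nonneg[OF lip] by (intro mult_left_mono)
    finally show "norm (F (x s) - F (y s)) \<le> L * dist x y" .
  qed (use assms cont in \<open>auto intro: continuous_on_diff\<close>)
  finally show ?thesis .
qed

lemma clamp_comp_bcontfun:
  fixes f :: "real \<Rightarrow> 'a::metric_space"
  assumes "continuous_on {c..d} f" "c \<le> d"
  shows "(\<lambda>t. f (max c (min d t))) \<in> bcontfun"
proof -
  have "continuous_on UNIV (\<lambda>t. max c (min d t))" by (intro continuous_intros)
  then have "continuous_on UNIV (\<lambda>t. f (max c (min d t)))"
    using assms by (intro continuous_on_compose2[OF assms(1)]) auto
  moreover have "bounded (f ` {c..d})"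
    by (intro compact_imp_bounded compact_continuous_image assms(1) compact_Icc)
  then have "bounded (range (\<lambda>t. f (max c (min d t))))"
    by (rule bounded_subset) (use assms(2) in auto)
  ultimately show ?thesis unfolding bcontfun_def by simp
qed

text \<open>Picard iteration as a contraction on bounded continuous functions, each read on
  [t0 - h, t0 + h] after clamping time into that interval.\<close>

lemma picard_fixpoint:
  fixes F :: "'a::banach \<Rightarrow> 'a"
  assumes lip: "L-lipschitz_on UNIV F" and h: "0 < h" "4 * h * L < 1"
  obtains X where "continuous_on UNIV X"
    "\<forall>t\<in>{t0-h..t0+h}.
       X t = x0 + integral {t0-h..t} (\<lambda>s. F (X s)) - integral {t0-h..t0} (\<lambda>s. F (X s))"
proof -
  define I where "I = {t0-h..t0+h}"
  have t0I: "t0 \<in> I" unfolding I_def using h by simp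
  have L0: "0 \<le> L" using lipschitz_on_nonneg[OF lip] .
  define J where "J x u = integral {t0-h..u} (\<lambda>s. F (x s))" for x :: "real \<Rightarrow>\<^sub>C 'a" and u
  have J_lip: "norm (J x u - J y u) \<le> 2 * h * L * dist x y" if "u \<in> I" for x y u
  proof -
    have "norm (J x u - J y u) \<le> L * dist x y * (u - (t0-h))"
      unfolding J_def using that I_def by (intro norm_integral_diff_lipschitz_le[OF lip]) simp
    also have "\<dots> \<le> L * dist x y * (2 * h)"
      using that L0 unfolding I_def by (intro mult_left_mono) auto
    finally show ?thesis by (simp add: algebra_simps)
  qed
  define cl where "cl t = max (t0-h) (min (t0+h) t)" for t
  have clI: "cl t \<in> I" for t unfolding cl_def I_def using h by auto
  define T where "T x = Bcontfun (\<lambda>t. x0 + J x (cl t) - J x t0)" for x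
  have T_apply: "T x t = x0 + J x (cl t) - J x t0" for x t
  proof -
    have "continuous_on {t0-h..t0+h} (\<lambda>u. x0 + J x u - J x t0)"
      unfolding J_def
      by (intro continuous_intros indefinite_integral_continuous_1 integrable_continuous_interval
          continuous_on_compose2[OF lipschitz_on_continuous_on[OF lip] continuous_on_apply_bcontfun])
         auto
    then have "(\<lambda>t. x0 + J x (cl t) - J x t0) \<in> bcontfun"
      unfolding cl_def using h(1) by (intro clamp_comp_bcontfun) auto
    then show ?thesis unfolding T_def by (simp add: Bcontfun_inverse)
  qed
  have "dist (T x) (T y) \<le> (4 * h * L) * dist x y" for x y
  proof (rule dist_bound)
    fix t
    have "dist (T x t) (T y t) = norm ((J x (cl t) - J y (cl t)) - (J x t0 - J y t0))"
      unfolding T_apply dist_norm by (simp add: algebra_simps)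
    also have "\<dots> \<le> 2 * h * L * dist x y + 2 * h * L * dist x y"
      by (intro norm_triangle_le_diff add_mono J_lip clI t0I)
    finally show "dist (T x t) (T y t) \<le> (4 * h * L) * dist x y" by (simp add: algebra_simps)
  qed
  then obtain x where "T x = x" using banach_fix_type[of "4 * h * L" T] h L0 by auto
  then have "\<forall>t\<in>I. x t = x0 + J x t - J x t0"
    using T_apply[of x] unfolding cl_def I_def by auto
  then show thesis using that[of "apply_bcontfun x"] unfolding I_def J_def by simp
qed

lemma picard_local_solution:
  fixes F :: "'a::banach \<Rightarrow> 'a"
  assumes lip: "L-lipschitz_on UNIV F" and bnd: "\<forall>z. norm (F z) \<le> M"
    and h: "0 < h" "4 * h * L < 1"
  obtains X where "X t0 = x0"
    "\<forall>t\<in>{t0-h..t0+h}. (X has_vector_derivative F (X t)) (at t within {t0-h..t0+h})"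
    "\<forall>t\<in>{t0-h..t0+h}. dist (X t) x0 \<le> M * h"
proof -
  define I where "I = {t0-h..t0+h}"
  have t0I: "t0 \<in> I" unfolding I_def using h by simp
  obtain X where cX: "continuous_on UNIV X"
    and X_eq: "\<forall>t\<in>I.
      X t = x0 + integral {t0-h..t} (\<lambda>s. F (X s)) - integral {t0-h..t0} (\<lambda>s. F (X s))"
    using picard_fixpoint[OF lip h] unfolding I_def by blast
  have cF: "continuous_on I (\<lambda>s. F (X s))"
    using continuous_on_compose2[OF lipschitz_on_continuous_on[OF lip] cX]
    by (auto intro: continuous_on_subset)
  have X_deriv: "\<forall>t\<in>I. (X has_vector_derivative F (X t)) (at t within I)"
  proof
    fix t assume t: "t \<in> I"
    have "((\<lambda>u. integral {t0-h..u} (\<lambda>s. F (X s))) has_vector_derivative F (X t)) (at t within I)"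
      using integral_has_vector_derivative[OF cF[unfolded I_def] t[unfolded I_def]]
      unfolding I_def .
    then have D: "((\<lambda>u. x0 + integral {t0-h..u} (\<lambda>s. F (X s)) - integral {t0-h..t0} (\<lambda>s. F (X s)))
                     has_vector_derivative F (X t)) (at t within I)"
      by (auto intro!: derivative_eq_intros)
    show "(X has_vector_derivative F (X t)) (at t within I)"
      by (rule has_vector_derivative_transform[OF t _ D]) (use X_eq in simp)
  qed
  have M0: "0 \<le> M" using bnd norm_ge_zero order_trans by blast
  have lipX: "M-lipschitz_on I X"
    unfolding I_def using bnd M0
    by (intro lipschitz_on_vector_derivative_bound[OF convex_closed_interval X_deriv[unfolded I_def]])
       auto
  have "dist (X t) x0 \<le> M * h" if "t \<in> I" for t
  proof -
    have "dist (X t) (X t0) \<le> M * dist t t0" using lipschitz_onD[OF lipX that t0I] .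
    also have "\<dots> \<le> M * h"
      using that M0 unfolding I_def by (intro mult_left_mono) (auto simp: dist_real_def)
    finally show ?thesis using X_eq t0I by simp
  qed
  then show thesis using that[of X] X_eq t0I X_deriv unfolding I_def by simp
qed

section \<open>Separated Hamiltonian systems\<close>

definition sep_ode_sol ::
  "(real \<Rightarrow> real) \<Rightarrow> (real \<Rightarrow> real) \<Rightarrow> real set \<Rightarrow> (real \<Rightarrow> real) \<Rightarrow> (real \<Rightarrow> real) \<Rightarrow> bool" where
  "sep_ode_sol a b S q p \<longleftrightarrow>
     (\<forall>t\<in>S. (q has_real_derivative a (p t)) (at t within S) \<and>
            (p has_real_derivative b (q t)) (at t within S))"

lemma sep_ode_sol_subset:
  "sep_ode_sol a b S q p \<Longrightarrow> T \<subseteq> S \<Longrightarrow> sep_ode_sol a b T q p"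
  unfolding sep_ode_sol_def by (meson DERIV_subset subsetD)

lemma sep_ode_sol_cong:
  assumes "\<forall>t\<in>S. a' (p t) = a (p t) \<and> b' (q t) = b (q t)"
  shows "sep_ode_sol a' b' S q p \<longleftrightarrow> sep_ode_sol a b S q p"
  using assms unfolding sep_ode_sol_def by simp

lemma continuous_on_sep_ode_sol:
  assumes "sep_ode_sol a b S q p"
  shows "continuous_on S q" "continuous_on S p"
  using assms unfolding sep_ode_sol_def
  by (meson DERIV_continuous continuous_on_eq_continuous_within)+

text \<open>Along a solution of q' = A 0 (p), p' = B 0 (q), the time derivative of a polynomial in
  q, p, A i (p), B j (q) is again such a polynomial, where A and B are the derivative families of
  the two vector field components. Formal differentiation of these terms therefore produces all
  derivatives of (q, p).\<close>

datatype sep_term = Tq | Tp | TA nat | TB nat | TAdd sep_term sep_term | TMul sep_term sep_term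

fun sep_eval :: "(nat \<Rightarrow> real \<Rightarrow> real) \<Rightarrow> (nat \<Rightarrow> real \<Rightarrow> real) \<Rightarrow>
    (real \<Rightarrow> real) \<Rightarrow> (real \<Rightarrow> real) \<Rightarrow> sep_term \<Rightarrow> real \<Rightarrow> real" where
  "sep_eval A B q p Tq t = q t"
| "sep_eval A B q p Tp t = p t"
| "sep_eval A B q p (TA i) t = A i (p t)"
| "sep_eval A B q p (TB j) t = B j (q t)"
| "sep_eval A B q p (TAdd e1 e2) t = sep_eval A B q p e1 t + sep_eval A B q p e2 t"
| "sep_eval A B q p (TMul e1 e2) t = sep_eval A B q p e1 t * sep_eval A B q p e2 t"

fun sep_ddt :: "sep_term \<Rightarrow> sep_term" where
  "sep_ddt Tq = TA 0"
| "sep_ddt Tp = TB 0"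
| "sep_ddt (TA i) = TMul (TA (Suc i)) (TB 0)"
| "sep_ddt (TB j) = TMul (TB (Suc j)) (TA 0)"
| "sep_ddt (TAdd e1 e2) = TAdd (sep_ddt e1) (sep_ddt e2)"
| "sep_ddt (TMul e1 e2) = TAdd (TMul (sep_ddt e1) e2) (TMul e1 (sep_ddt e2))"

lemma sep_eval_has_real_derivative:
  assumes A: "\<forall>k. \<forall>y\<in>U. (A k has_real_derivative A (Suc k) y) (at y)"
    and B: "\<forall>k y. (B k has_real_derivative B (Suc k) y) (at y)"
    and sol: "sep_ode_sol (A 0) (B 0) S q p" and pU: "\<forall>t\<in>S. p t \<in> U" and t: "t \<in> S"
  shows "((\<lambda>t. sep_eval A B q p e t) has_real_derivative sep_eval A B q p (sep_ddt e) t)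
           (at t within S)"
proof (induction e)
  case (TA i)
  show ?case
    using DERIV_chain2[of "A i" _ p t _ S] A pU sol t unfolding sep_ode_sol_def by simp
next
  case (TB j)
  have "((\<lambda>t. B j (q t)) has_real_derivative B (Suc j) (q t) * A 0 (p t)) (at t within S)"
    using DERIV_chain2[of "B j" _ q t _ S] B sol t unfolding sep_ode_sol_def by blast
  then show ?case by (simp add: mult.commute)
next
  case (TMul e1 e2)
  then show ?case by (auto intro!: derivative_eq_intros)
qed (use sol t in \<open>auto simp: sep_ode_sol_def intro: DERIV_add\<close>)

lemma smooth_on_sep_ode_sol:
  assumes A: "\<forall>k. \<forall>y\<in>U. (A k has_real_derivative A (Suc k) y) (at y)" "\<forall>y\<in>U. A 0 y = a y"
    and B: "\<forall>k x. (B k has_real_derivative B (Suc k) x) (at x)" "\<forall>x. B 0 x = b x"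
    and sol: "sep_ode_sol a b S q p" and pU: "\<forall>t\<in>S. p t \<in> U"
  shows "smooth_on S (\<lambda>t. (q t, p t))"
  unfolding smooth_on_def
proof (intro exI[of _ "\<lambda>k t. (sep_eval A B q p ((sep_ddt ^^ k) Tq) t,
                               sep_eval A B q p ((sep_ddt ^^ k) Tp) t)"] conjI ballI allI)
  have "sep_ode_sol (A 0) (B 0) S q p"
    using sol A(2) B(2) pU sep_ode_sol_cong[of S "A 0" p a "B 0" q b] by simp
  note deriv = sep_eval_has_real_derivative[OF A(1) B(1) this pU]
  fix k t assume "t \<in> S"
  then show "((\<lambda>t. (sep_eval A B q p ((sep_ddt ^^ k) Tq) t, sep_eval A B q p ((sep_ddt ^^ k) Tp) t))
      has_vector_derivative
      (sep_eval A B q p ((sep_ddt ^^ Suc k) Tq) t, sep_eval A B q p ((sep_ddt ^^ Suc k) Tp) t))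
      (at t within S)"
    using deriv
    by (auto intro!: has_vector_derivative_Pair
        simp: has_real_derivative_iff_has_vector_derivative[symmetric])
qed simp

lemma smooth_on_subset: "smooth_on S f \<Longrightarrow> T \<subseteq> S \<Longrightarrow> smooth_on T f"
  unfolding smooth_on_def by (meson has_vector_derivative_within_subset subsetD)

lemma sep_ode_sol_unique:
  fixes a a' b :: "real \<Rightarrow> real"
  assumes da: "\<forall>y\<in>U. (a has_real_derivative a' y) (at y)" and ca: "continuous_on U a'"
    and lb: "Lb-lipschitz_on UNIV b"
    and sol1: "sep_ode_sol a b {c..d} q1 p1" and sol2: "sep_ode_sol a b {c..d} q2 p2"
    and pU: "p1 ` {c..d} \<subseteq> U" "p2 ` {c..d} \<subseteq> U"
    and t0: "t0 \<in> {c..d}" "q1 t0 = q2 t0" "p1 t0 = p2 t0" and t: "t \<in> {c..d}"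
  shows "q1 t = q2 t \<and> p1 t = p2 t"
proof -
  define K where "K = p1 ` {c..d} \<union> p2 ` {c..d}"
  have cp: "continuous_on {c..d} p1" "continuous_on {c..d} p2"
    using continuous_on_sep_ode_sol sol1 sol2 by blast+
  have "p1 t0 \<in> p1 ` {c..d} \<inter> p2 ` {c..d}" using t0 by (metis IntI imageI)
  then have "connected K" unfolding K_def
    by (intro connected_Un connected_continuous_image cp) auto
  then have "convex K" by (simp add: connected_convex_1)
  moreover have "compact K"
    unfolding K_def by (intro compact_Un compact_continuous_image cp compact_Icc)
  moreover have "K \<subseteq> U" unfolding K_def using pU by blast
  ultimately obtain La where la: "La-lipschitz_on K a"
    using lipschitz_on_compact_convex_C1 da continuous_on_subset[OF ca] by (meson subsetD)
  define \<phi> where "\<phi> s = (q1 s - q2 s)\<^sup>2 + (p1 s - p2 s)\<^sup>2" for s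
  define \<phi>' where "\<phi>' s = 2 * (q1 s - q2 s) * (a (p1 s) - a (p2 s))
                        + 2 * (p1 s - p2 s) * (b (q1 s) - b (q2 s))" for s
  have "\<forall>s\<in>{c..d}. (\<phi> has_real_derivative \<phi>' s) (at s within {c..d})"
    using sol1 sol2 unfolding \<phi>_def \<phi>'_def sep_ode_sol_def
    by (auto intro!: derivative_eq_intros simp: algebra_simps)
  moreover have "\<forall>s\<in>{c..d}. 0 \<le> \<phi> s \<and> \<bar>\<phi>' s\<bar> \<le> (La + Lb) * \<phi> s"
  proof
    fix s assume s: "s \<in> {c..d}"
    define u v where "u = q1 s - q2 s" and "v = p1 s - p2 s"
    have "p1 s \<in> K" "p2 s \<in> K" using s unfolding K_def by auto
    then have ha: "\<bar>a (p1 s) - a (p2 s)\<bar> \<le> La * \<bar>v\<bar>"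
      using lipschitz_onD[OF la] unfolding v_def dist_real_def by blast
    have hb: "\<bar>b (q1 s) - b (q2 s)\<bar> \<le> Lb * \<bar>u\<bar>"
      using lipschitz_onD[OF lb] unfolding u_def dist_real_def by blast
    have "\<bar>\<phi>' s\<bar> \<le> 2 * \<bar>u\<bar> * \<bar>a (p1 s) - a (p2 s)\<bar> + 2 * \<bar>v\<bar> * \<bar>b (q1 s) - b (q2 s)\<bar>"
      unfolding \<phi>'_def u_def v_def
      by (rule order_trans[OF abs_triangle_ineq]) (simp only: abs_mult abs_numeral order_refl)
    also have "\<dots> \<le> (La + Lb) * (2 * \<bar>u\<bar> * \<bar>v\<bar>)"
      using mult_left_mono[OF ha, of "2 * \<bar>u\<bar>"] mult_left_mono[OF hb, of "2 * \<bar>v\<bar>"]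
      by (simp add: algebra_simps)
    also have "\<dots> \<le> (La + Lb) * (u\<^sup>2 + v\<^sup>2)"
      using lipschitz_on_nonneg[OF la] lipschitz_on_nonneg[OF lb] sum_squares_bound[of "\<bar>u\<bar>" "\<bar>v\<bar>"]
      by (intro mult_left_mono) (auto simp: power2_eq_square)
    finally show "0 \<le> \<phi> s \<and> \<bar>\<phi>' s\<bar> \<le> (La + Lb) * \<phi> s"
      unfolding \<phi>_def u_def v_def by simp
  qed
  moreover have "\<phi> t0 = 0" using t0 unfolding \<phi>_def by simp
  ultimately have "\<phi> t = 0" using gronwall_vanishing t0(1) t by blast
  then show ?thesis unfolding \<phi>_def by (simp add: sum_power2_eq_zero_iff)
qed

text \<open>The component a is frozen outside a ball around ps, which makes the vector field globally
  Lipschitz and bounded; on a short enough time interval the solution never leaves that ball.\<close>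

lemma sep_ode_sol_local_exists:
  fixes a a' b :: "real \<Rightarrow> real"
  assumes P: "open P" "ps \<in> P" and Q: "open Q" "qs \<in> Q"
    and da: "\<forall>y\<in>P. (a has_real_derivative a' y) (at y)" and ca: "continuous_on P a'"
    and lb: "Lb-lipschitz_on UNIV b" and mb: "\<forall>x. \<bar>b x\<bar> \<le> Mb"
  shows "\<exists>h>0. \<exists>q p. q ts = qs \<and> p ts = ps \<and> sep_ode_sol a b {ts-h..ts+h} q p \<and>
           (\<forall>t\<in>{ts-h..ts+h}. p t \<in> P \<and> q t \<in> Q)"
proof -
  obtain r1 r2 where r12: "r1 > 0" "cball ps r1 \<subseteq> P" "r2 > 0" "cball qs r2 \<subseteq> Q"
    using P Q open_contains_cball by metis
  define r where "r = min r1 r2"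
  have r: "r > 0" "cball ps r \<subseteq> P" "cball qs r \<subseteq> Q"
    using r12 subset_cball[of r r1 ps] subset_cball[of r r2 qs] unfolding r_def by auto
  define cl where "cl y = max (ps-r) (min (ps+r) y)" for y
  obtain La Ma where la: "La-lipschitz_on UNIV (\<lambda>y. a (cl y))" and ma: "\<forall>y. \<bar>a (cl y)\<bar> \<le> Ma"
    using lipschitz_on_clamp_C1[OF r(1), of ps a a'] da continuous_on_subset[OF ca] r(2)
    unfolding cl_def by blast
  define F where "F z = (a (cl (snd z)), b (fst z))" for z :: "real \<times> real"
  define LF MF where "LF = La + Lb" and "MF = Ma + Mb"
  have LF: "LF-lipschitz_on UNIV F"
    unfolding F_def LF_def by (rule lipschitz_on_swap_Pair[OF la lb])
  have MF: "\<forall>z. norm (F z) \<le> MF"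
    unfolding F_def MF_def using norm_Pair_le ma mb by (smt (verit) real_norm_def)
  have LF0: "0 \<le> LF" using lipschitz_on_nonneg[OF LF] .
  have MF0: "0 \<le> MF" using MF norm_ge_zero order_trans by blast
  define h where "h = min (1 / (8 * (LF + 1))) (r / (MF + 1))"
  have h: "0 < h" "4 * h * LF < 1" "MF * h \<le> r"
  proof -
    show "0 < h" unfolding h_def using r MF0 LF0 by simp
    have "h * (8 * (LF + 1)) \<le> 1" "h * (MF + 1) \<le> r"
      unfolding h_def using LF0 MF0 by (simp_all add: pos_le_divide_eq[symmetric])
    then show "4 * h * LF < 1" "MF * h \<le> r" using \<open>0 < h\<close> by (simp_all add: algebra_simps)
  qed
  obtain X where X: "X ts = (qs, ps)"
    "\<forall>t\<in>{ts-h..ts+h}. (X has_vector_derivative F (X t)) (at t within {ts-h..ts+h})"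
    "\<forall>t\<in>{ts-h..ts+h}. dist (X t) (qs, ps) \<le> MF * h"
    using picard_local_solution[OF LF MF h(1,2)] by blast
  define q p where "q t = fst (X t)" and "p t = snd (X t)" for t
  have pP: "p t \<in> cball ps r" and qQ: "q t \<in> Q" if "t \<in> {ts-h..ts+h}" for t
  proof -
    have "dist (p t) ps \<le> r" "dist (q t) qs \<le> r"
      using X(3) that h(3) dist_fst_le[of "X t" "(qs, ps)"] dist_snd_le[of "X t" "(qs, ps)"]
      unfolding p_def q_def by fastforce+
    then show "p t \<in> cball ps r" "q t \<in> Q" using r by (auto simp: dist_commute)
  qed
  have "sep_ode_sol a b {ts-h..ts+h} q p"
    unfolding sep_ode_sol_def
  proof
    fix t assume t: "t \<in> {ts-h..ts+h}"
    have "cl (p t) = p t" using pP[OF t] unfolding cl_def cball_eq_atLeastAtMost by auto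
    then show "(q has_real_derivative a (p t)) (at t within {ts-h..ts+h}) \<and>
          (p has_real_derivative b (q t)) (at t within {ts-h..ts+h})"
      using has_real_derivative_fst_snd[OF X(2)[rule_format, OF t]]
      unfolding q_def p_def F_def by simp
  qed
  moreover have "q ts = qs" "p ts = ps" using X(1) unfolding q_def p_def by simp_all
  ultimately show ?thesis using h(1) pP qQ r(2) by blast
qed

lemma sep_ode_sol_local_flow:
  fixes a b :: "real \<Rightarrow> real"
  assumes A: "\<forall>k. \<forall>y\<in>U. (A k has_real_derivative A (Suc k) y) (at y)" "\<forall>y\<in>U. A 0 y = a y"
    and B: "\<forall>k x. (B k has_real_derivative B (Suc k) x) (at x)" "\<forall>x. B 0 x = b x"
    and lb: "Lb-lipschitz_on UNIV b" and mb: "\<forall>x. \<bar>b x\<bar> \<le> Mb"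
    and U: "open U" "ps \<in> U" and force: "0 < b qs"
  obtains h q p where "0 < h" "q ts = qs" "p ts = ps"
    "sep_ode_sol a b {ts-h..ts+h} q p" "\<forall>t\<in>{ts-h..ts+h}. p t \<in> U"
    "smooth_on {ts-h..ts+h} (\<lambda>t. (q t, p t))"
    "\<forall>t\<in>{ts<..ts+h}. ps < p t"
    "((\<lambda>t. (q t, p t)) \<longlongrightarrow> (qs, ps)) (at_right ts)"
    "\<And>\<delta> q' p'. \<delta> \<le> h \<Longrightarrow> sep_ode_sol a b {ts-\<delta>..ts+\<delta>} q' p' \<Longrightarrow>
       \<forall>t\<in>{ts-\<delta>..ts+\<delta>}. p' t \<in> U \<Longrightarrow> q' ts = qs \<Longrightarrow> p' ts = ps \<Longrightarrow>
       \<forall>t\<in>{ts-\<delta>..ts+\<delta>}. q' t = q t \<and> p' t = p t"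
proof -
  have da: "\<forall>y\<in>U. (a has_real_derivative A 1 y) (at y)"
    using A U(1) by (metis One_nat_def has_field_derivative_transform_within_open)
  have ca: "continuous_on U (A 1)"
    using A(1) by (meson DERIV_isCont continuous_at_imp_continuous_on)
  have "open {x. 0 < b x}"
    using lipschitz_on_continuous_on[OF lb] by (intro open_Collect_less) auto
  then obtain h q p where h: "0 < h" and init: "q ts = qs" "p ts = ps"
    and sol: "sep_ode_sol a b {ts-h..ts+h} q p"
    and inside: "\<forall>t\<in>{ts-h..ts+h}. p t \<in> U \<and> q t \<in> {x. 0 < b x}"
    using sep_ode_sol_local_exists[OF U _ _ da ca lb mb] force by blast
  have "\<forall>t\<in>{ts<..ts+h}. ps < p t"
  proof
    fix t assume t: "t \<in> {ts<..ts+h}"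
    have "sep_ode_sol a b {ts..ts+h} q p" by (rule sep_ode_sol_subset[OF sol]) auto
    then have "p ts < p t"
      using inside t unfolding sep_ode_sol_def
      by (intro pos_derivative_within_imp_less[of ts "ts+h" p "\<lambda>t. b (q t)"]) auto
    then show "ps < p t" using init by simp
  qed
  moreover have "((\<lambda>t. (q t, p t)) \<longlongrightarrow> (qs, ps)) (at_right ts)"
  proof -
    have "sep_ode_sol a b {ts..ts+h} q p" by (rule sep_ode_sol_subset[OF sol]) auto
    then have "continuous_on {ts..ts+h} q" "continuous_on {ts..ts+h} p"
      by (rule continuous_on_sep_ode_sol)+
    then have "(q \<longlongrightarrow> qs) (at_right ts)" "(p \<longlongrightarrow> ps) (at_right ts)"
      using continuous_on_Icc_at_rightD h init by (metis less_add_same_cancel1)+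
    then show ?thesis by (rule tendsto_Pair)
  qed
  moreover have "\<forall>t\<in>{ts-\<delta>..ts+\<delta>}. q' t = q t \<and> p' t = p t"
    if "\<delta> \<le> h" "sep_ode_sol a b {ts-\<delta>..ts+\<delta>} q' p'" "\<forall>t\<in>{ts-\<delta>..ts+\<delta>}. p' t \<in> U"
       "q' ts = qs" "p' ts = ps" for \<delta> q' p'
  proof
    fix t assume t: "t \<in> {ts-\<delta>..ts+\<delta>}"
    have "sep_ode_sol a b {ts-\<delta>..ts+\<delta>} q p"
      using that by (intro sep_ode_sol_subset[OF sol]) auto
    moreover have "p' ` {ts-\<delta>..ts+\<delta>} \<subseteq> U" "p ` {ts-\<delta>..ts+\<delta>} \<subseteq> U"
      using that inside by auto
    moreover have "ts \<in> {ts-\<delta>..ts+\<delta>}" "q' ts = q ts" "p' ts = p ts"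
      using that init t by auto
    ultimately show "q' t = q t \<and> p' t = p t"
      by (rule sep_ode_sol_unique[OF da ca lb that(2) _ _ _ _ _ _ t])
  qed
  moreover have "smooth_on {ts-h..ts+h} (\<lambda>t. (q t, p t))"
    using smooth_on_sep_ode_sol[OF A B sol] inside by blast
  ultimately show thesis using that h init sol inside by blast
qed

section \<open>The band crossing\<close>

lemma ham_sol_iff_sep_ode_sol:
  "ham_sol E W S q p \<longleftrightarrow> sep_ode_sol (deriv E) (\<lambda>x. - deriv W x) S q p"
  unfolding ham_sol_def sep_ode_sol_def ..

lemma ham_sol_subset: "ham_sol E W S q p \<Longrightarrow> T \<subseteq> S \<Longrightarrow> ham_sol E W T q p"
  unfolding ham_sol_iff_sep_ode_sol by (rule sep_ode_sol_subset)

lemma smooth_on_open_deriv_family: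
  assumes "smooth_on U f" "open U"
  obtains A where "\<forall>k. \<forall>x\<in>U. (A k has_real_derivative A (Suc k) x) (at x)"
    "\<forall>x\<in>U. A 0 x = deriv f x"
proof -
  obtain D where D0: "\<forall>x\<in>U. D 0 x = f x"
    and D: "\<forall>k. \<forall>x\<in>U. (D k has_vector_derivative D (Suc k) x) (at x within U)"
    using assms(1) unfolding smooth_on_def by blast
  have D_at: "\<forall>k. \<forall>x\<in>U. (D k has_real_derivative D (Suc k) x) (at x)"
    using D at_within_open[OF _ assms(2)] by (simp add: has_real_derivative_iff_has_vector_derivative)
  have "D 1 x = deriv f x" if "x \<in> U" for x
    using has_field_derivative_transform_within_open[of "D 0" "D 1 x" x U f] D_at D0 assms(2) that
    by (simp add: DERIV_imp_deriv)
  then show thesis using that[of "\<lambda>k. D (Suc k)"] D_at by simp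
qed

lemma smooth_bounded_derivs_neg_deriv:
  assumes "smooth_bounded_derivs W"
  obtains B Lb Mb where "\<forall>k x. (B k has_real_derivative B (Suc k) x) (at x)"
    "\<forall>x. B 0 x = - deriv W x" "Lb-lipschitz_on UNIV (\<lambda>x. - deriv W x)" "\<forall>x. \<bar>deriv W x\<bar> \<le> Mb"
proof -
  obtain D where D0: "D 0 = W" and D: "\<forall>k x. (D k has_real_derivative D (Suc k) x) (at x)"
    and Db: "\<forall>k\<ge>1. bounded (range (D k))"
    using assms unfolding smooth_bounded_derivs_def by blast
  have dW: "deriv W x = D 1 x" for x
    using D D0 by (metis DERIV_imp_deriv One_nat_def)
  obtain M1 M2 where M1: "\<forall>x. \<bar>D 1 x\<bar> \<le> M1" and M2: "\<forall>x. \<bar>D 2 x\<bar> \<le> M2"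
    using Db[rule_format, of 1] Db[rule_format, of 2] unfolding bounded_iff
    by (metis rangeI real_norm_def one_le_numeral order_refl)
  have "(max 0 M2)-lipschitz_on UNIV (\<lambda>x. - deriv W x)"
  proof (rule lipschitz_on_real_derivative_bound[where f'="\<lambda>x. - D 2 x"])
    show "\<forall>x\<in>UNIV. ((\<lambda>x. - deriv W x) has_real_derivative - D 2 x) (at x within UNIV)"
      unfolding dW using D by (auto intro!: derivative_eq_intros simp: numeral_2_eq_2)
    show "\<forall>x\<in>UNIV. \<bar>- D 2 x\<bar> \<le> max 0 M2" using M2 by (simp add: le_max_iff_disj)
  qed auto
  moreover have "\<forall>k x. ((\<lambda>x. - D (Suc k) x) has_real_derivative - D (Suc (Suc k)) x) (at x)"
    using D by (auto intro!: derivative_eq_intros)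
  ultimately show thesis using that[of "\<lambda>k x. - D (Suc k) x"] M1 by (simp add: dW)
qed

lemma bloch_gap_pos_off_crossing:
  assumes A1: "\<forall>k\<in>U. k \<noteq> ps \<longrightarrow> bloch_band V n k \<noteq> bloch_band V (Suc n) k"
    and A2: "\<exists>M>0. \<forall>k\<in>closure U. \<forall>m. 1 \<le> m \<and> m \<notin> {n, Suc n} \<longrightarrow>
               M \<le> \<bar>bloch_band V m k - bloch_band V (Suc n) k\<bar> \<and>
               M \<le> \<bar>bloch_band V n k - bloch_band V m k\<bar>"
    and k: "k \<in> U" "k \<noteq> ps"
  shows "bloch_gap V n k > 0"
proof -
  obtain M where "M > 0" and M: "\<forall>m. 1 \<le> m \<and> m \<notin> {n, Suc n} \<longrightarrow>
      M \<le> \<bar>bloch_band V n k - bloch_band V m k\<bar>"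
    using A2 k closure_subset by blast
  define c where "c = min M \<bar>bloch_band V n k - bloch_band V (Suc n) k\<bar>"
  have "c > 0" unfolding c_def using A1 k \<open>M > 0\<close> by simp
  also have "c \<le> bloch_gap V n k"
    unfolding bloch_gap_def
  proof (rule cInf_greatest)
    show "{\<bar>bloch_band V n k - bloch_band V m' k\<bar> |m'. 1 \<le> m' \<and> m' \<noteq> n} \<noteq> {}"
      by (auto intro!: exI[of _ "Suc n"])
    fix x assume "x \<in> {\<bar>bloch_band V n k - bloch_band V m' k\<bar> |m'. 1 \<le> m' \<and> m' \<noteq> n}"
    then obtain m' where "x = \<bar>bloch_band V n k - bloch_band V m' k\<bar>" "1 \<le> m'" "m' \<noteq> n" by blast
    then show "c \<le> x" using M unfolding c_def by (cases "m' = Suc n") auto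
  qed
  finally show ?thesis .
qed

lemma deriv_E_minus_right:
  assumes "ps < k"
  shows "deriv (E_minus V n ps) k = deriv (bloch_band V n) k"
proof (rule deriv_cong_ev)
  have "eventually (\<lambda>x. x \<in> {ps<..}) (nhds k)" using assms by (intro eventually_nhds_in_open) auto
  then show "eventually (\<lambda>x. E_minus V n ps x = bloch_band V n x) (nhds k)"
    by eventually_elim (simp add: E_minus_def)
qed simp

theorem proposition3p15:
  fixes V W :: "real \<Rightarrow> real" and n :: nat and U :: "real set"
    and ps qs ts q0 p0 :: real and q p :: "real \<Rightarrow> real"
  assumes V_smooth: "smooth_on UNIV V" and V_per: "\<forall>z. V (z + 1) = V z"
    and W_smooth: "smooth_bounded_derivs W"
    and n_pos: "1 \<le> n"
    and U_open: "open U" and U_sub: "U \<subseteq> {0..2*pi}" and ps_U: "ps \<in> U"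
    and A1: "bloch_band V n ps = bloch_band V (Suc n) ps"
            "\<forall>k\<in>U. k \<noteq> ps \<longrightarrow> bloch_band V n k \<noteq> bloch_band V (Suc n) k"
    and A2: "\<exists>M>0. \<forall>k\<in>closure U. \<forall>m. 1 \<le> m \<and> m \<notin> {n, Suc n} \<longrightarrow>
               M \<le> \<bar>bloch_band V m k - bloch_band V (Suc n) k\<bar> \<and>
               M \<le> \<bar>bloch_band V n k - bloch_band V m k\<bar>"
    and A3: "smooth_on U (E_plus V n ps)" "smooth_on U (E_minus V n ps)"
            "\<exists>chiP chiM :: real \<Rightarrow> real \<Rightarrow> complex.
               (\<forall>k\<in>U. normalized_bloch_eigenfunction V k (E_plus V n ps k) (\<lambda>z. chiP z k) \<and>
                       normalized_bloch_eigenfunction V k (E_minus V n ps k) (\<lambda>z. chiM z k)) \<and>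
               smooth2_on UNIV U chiP \<and> smooth2_on UNIV U chiM"
    and A4: "deriv (E_plus V n ps) ps > 0" "deriv (E_minus V n ps) ps < 0"
    and gap0: "bloch_gap V n p0 > 0"
    and ts_pos: "ts > 0"
    and init: "q 0 = q0" "p 0 = p0"
    and sol_smooth: "smooth_on {0..<ts} (\<lambda>t. (q t, p t))"
    and sol: "ham_sol (bloch_band V n) W {0..<ts} q p"
    and sol_unique: "\<forall>q' p'. smooth_on {0..<ts} (\<lambda>t. (q' t, p' t)) \<and> q' 0 = q0 \<and> p' 0 = p0 \<and>
                        ham_sol (bloch_band V n) W {0..<ts} q' p' \<longrightarrow>
                        (\<forall>t\<in>{0..<ts}. q' t = q t \<and> p' t = p t)"
    and sol_gap: "\<forall>t\<in>{0..<ts}. bloch_gap V n (p t) > 0"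
    and p_lim: "(p \<longlongrightarrow> ps) (at_left ts)"
    and q_lim: "(q \<longlongrightarrow> qs) (at_left ts)"
    and force: "- deriv W qs > 0"
  shows "\<exists>\<delta>0>0. \<forall>\<delta>. 0 < \<delta> \<and> \<delta> \<le> \<delta>0 \<longrightarrow>
     (\<exists>qm pm.
        \<comment> \<open>(i) existence and uniqueness of the E_- trajectory through (qs,ps) at time ts\<close>
        smooth_on {ts-\<delta>..ts+\<delta>} (\<lambda>t. (qm t, pm t)) \<and> (\<forall>t\<in>{ts-\<delta>..ts+\<delta>}. pm t \<in> U) \<and>
        ham_sol (E_minus V n ps) W {ts-\<delta>..ts+\<delta>} qm pm \<and> qm ts = qs \<and> pm ts = ps \<and>
        (\<forall>q' p'. smooth_on {ts-\<delta>..ts+\<delta>} (\<lambda>t. (q' t, p' t)) \<and> (\<forall>t\<in>{ts-\<delta>..ts+\<delta>}. p' t \<in> U) \<and>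
           ham_sol (E_minus V n ps) W {ts-\<delta>..ts+\<delta>} q' p' \<and> q' ts = qs \<and> p' ts = ps \<longrightarrow>
           (\<forall>t\<in>{ts-\<delta>..ts+\<delta>}. q' t = qm t \<and> p' t = pm t)) \<and>
        \<comment> \<open>(ii) and (iii)\<close>
        (\<exists>T0>ts+\<delta>. \<forall>T'. ts + \<delta> \<le> T' \<and> T' \<le> T0 \<longrightarrow>
           (\<exists>qn pn.
              (\<forall>t\<in>{ts<..T'}. pn t \<in> {0..2*pi}) \<and>
              ham_sol (bloch_band V n) W {ts<..T'} qn pn \<and>
              ((\<lambda>t. (qn t, pn t)) \<longlongrightarrow> (qs, ps)) (at_right ts) \<and>
              (\<forall>t\<in>{ts<..T'}. bloch_gap V n (pn t) > 0) \<and>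
              (\<forall>t\<in>{ts<..ts+\<delta>}. qm t = qn t \<and> pm t = pn t) \<and>
              smooth_on {ts-\<delta>..T'}
                (\<lambda>t. if t \<le> ts + \<delta> then (qm t, pm t) else (qn t, pn t)))))"
proof -
  obtain A where A: "\<forall>k. \<forall>x\<in>U. (A k has_real_derivative A (Suc k) x) (at x)"
      "\<forall>x\<in>U. A 0 x = deriv (E_minus V n ps) x"
    by (rule smooth_on_open_deriv_family[OF A3(2) U_open])
  obtain B Lb Mb where B: "\<forall>k x. (B k has_real_derivative B (Suc k) x) (at x)"
      "\<forall>x. B 0 x = - deriv W x"
    and lb: "Lb-lipschitz_on UNIV (\<lambda>x. - deriv W x)" and mb: "\<forall>x. \<bar>deriv W x\<bar> \<le> Mb"
    by (rule smooth_bounded_derivs_neg_deriv[OF W_smooth])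
  obtain h qm pm where h: "0 < h" and init: "qm ts = qs" "pm ts = ps"
    and sol: "ham_sol (E_minus V n ps) W {ts-h..ts+h} qm pm"
    and inU: "\<forall>t\<in>{ts-h..ts+h}. pm t \<in> U"
    and smooth: "smooth_on {ts-h..ts+h} (\<lambda>t. (qm t, pm t))"
    and right: "\<forall>t\<in>{ts<..ts+h}. ps < pm t"
    and lim: "((\<lambda>t. (qm t, pm t)) \<longlongrightarrow> (qs, ps)) (at_right ts)"
    and unique: "\<And>\<delta> q' p'. \<delta> \<le> h \<Longrightarrow> ham_sol (E_minus V n ps) W {ts-\<delta>..ts+\<delta>} q' p' \<Longrightarrow>
       \<forall>t\<in>{ts-\<delta>..ts+\<delta>}. p' t \<in> U \<Longrightarrow> q' ts = qs \<Longrightarrow> p' ts = ps \<Longrightarrow>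
       \<forall>t\<in>{ts-\<delta>..ts+\<delta>}. q' t = qm t \<and> p' t = pm t"
    using sep_ode_sol_local_flow[OF A B lb _ U_open ps_U, of Mb qs ts] mb force
    unfolding ham_sol_iff_sep_ode_sol by auto
  have ham_n: "ham_sol (bloch_band V n) W S qm pm" if "S \<subseteq> {ts<..ts+h}" for S
  proof -
    have "\<forall>t\<in>S. deriv (bloch_band V n) (pm t) = deriv (E_minus V n ps) (pm t)"
      using that right deriv_E_minus_right by (metis subsetD)
    moreover have "ham_sol (E_minus V n ps) W S qm pm"
      using that by (intro ham_sol_subset[OF sol]) auto
    ultimately show ?thesis
      unfolding ham_sol_iff_sep_ode_sol
      by (subst sep_ode_sol_cong[where a="deriv (E_minus V n ps)" and b="\<lambda>x. - deriv W x"]) auto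
  qed
  have gap: "\<forall>t\<in>{ts<..ts+h}. bloch_gap V n (pm t) > 0"
    using bloch_gap_pos_off_crossing[OF A1(2) A2] right inU by force
  have in_zone: "\<forall>t\<in>{ts-h..ts+h}. pm t \<in> {0..2*pi}" using inU U_sub by blast
  \<comment> \<open>the E_- trajectory serves both as (qm, pm) and as (qn, pn)\<close>
  have witness: "P qm pm \<Longrightarrow> \<exists>q p. P q p" for P by blast
  show ?thesis
    by (rule exI[of _ "h/2"], intro conjI allI impI witness exI[of _ "ts+h"] unique)
       (use h inU in_zone gap in
         \<open>auto intro: smooth_on_subset[OF smooth] ham_sol_subset[OF sol] ham_n simp: init lim\<close>)
qed

end
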